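(* Consider an instance of SPSC (defined in the context) and let $\{x_{ij}\},\{y_k\}$ be an optimal solution of the linear program (LP) defined in the context. Then the service placement $X^{\psi}$ output by algorithm SA2 (described in the context) has total reward at least $(1-e^{-1})R/4$, where $R$ is the maximum total reward of a feasible service placement.
   Context: An instance of the service placement with set constraints (SPSC) problem consists of finite sets $S$ (services), $V$ (nodes), $U$ (users); a size $s_i>0$ for each $i\in S$; a capacity $c_j>0$ for each $j\in V$; and for each user $k\in U$ a required service $i_k\in S$, a set $T_k\subseteq V$ and a reward $w_k>0$. A service placement is a family $X=\{X_i:i\in S\}$, $X_i\subseteq V$; it is feasible iff $\sum_{i}s_i\mathbf 1[j\in X_i]\le c_j$ for all $j$; its total reward is $\sum_kw_k\mathbf 1[T_k\cap X_{i_k}\ne\emptyset]$; $R$ is the maximum total reward over feasible placements. The LP has nonnegative real variables $x_{ij},y_k$: maximize $\sum_ky_kw_k$ s.t. $y_k\le\sum_{j\in T_k}x_{i_kj}$, $y_k\le1$ for all $k$; $\sum_ix_{ij}s_i\le c_j$ for all $j$; $x_{ij}=0$ if $s_i>c_j$; $0\le x_{ij}\le1$. Let $\beta:=1/4,\gamma:=1/2,\delta:=1/4$, $\mathbb N=\{1,2,\dots\}$. For $j\in V$: $P_j^\oplus:=\{i:c_j/2<s_i\le c_j\}$, $P_j^\ominus:=\{i:c_j/4<s_i\le c_j/2\}$, $P_j^q:=\{i:\gamma^qc_j\beta<s_i\le\gamma^{q-1}c_j\beta\}$ for $q\in\mathbb N$; $d_j^q:=\sum_{i\in P_j^q}x_{ij}$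 for $q\in\mathbb N\cup\{\oplus,\ominus\}$; $v_j:=\delta c_j/\sum_{i:s_i\le c_j\beta}s_ix_{ij}$; $n_j^q:=\lceil v_jd_j^q\rceil$ ($q\in\mathbb N$); $h_j:=d_j^\ominus$ if $d_j^\ominus<2$, else $h_j:=d_j^\ominus/2$. A construction map is $\zeta:V\to\{1,2,3\}$; its slot set $\Lambda(\zeta)$ (each slot $\sigma$ has a node $\nu(\sigma)$ and class $\kappa(\sigma)\in\mathbb N\cup\{\oplus,\ominus\}$) contains, for each $j$: one slot of class $\oplus$ if $\zeta(j)=1$; two slots of class $\ominus$ if $\zeta(j)=2$; for each $q\in\mathbb N$, $n_j^q$ slots of class $q$ if $\zeta(j)=3$; no other slots on $j$. A slot allocation of $\Lambda$ is $\tau:\Lambda\to S$ with $\tau(\sigma)\in P^{\kappa(\sigma)}_{\nu(\sigma)}$; $X^\tau_i:=\{j:\exists\sigma,\nu(\sigma)=j,\tau(\sigma)=i\}$; $f_\tau(k):=\mathbf 1[T_k\cap X^\tau_{i_k}\ne\emptyset]$. Random experiment: draw $\zeta$ with $\zeta(j)$ independent over $j$, equal to $1,2,3$ with probabilities $\delta d_j^\oplus$, $\delta h_j$, $1-\delta d_j^\oplus-\delta h_j$; then, given $\zeta$, each slot $\sigma\in\Lambda(\zeta)$ independently gets $\tau(\sigma)=i$ with probability $x_{i\nu(\sigma)}/d^{\kappa(\sigma)}_{\nu(\sigma)}$ for $i\in P^{\kappa(\sigma)}_{\nu(\sigma)}$. A partial construction map is $\zeta':V\to\{1,2,3,\emptyset\}$;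 $M(\zeta')$ is the set of construction maps agreeing with $\zeta'$ where $\zeta'\ne\emptyset$; $E'(\zeta'):=\mathbb E[\sum_kf_\tau(k)w_k\mid\zeta\in M(\zeta')]$. Algorithm SA2: (i) labelling: start with all nodes unlabelled; process nodes one at a time; for current node $j$ and $a\in\{1,2,3\}$ let $\zeta'_a$ be $\zeta'$ with $j$ labelled $a$, choose $a'$ maximizing $E'(\zeta'_a)$ and set $\zeta'(j):=a'$; let $\lambda$ be the final construction map and $\Lambda:=\Lambda(\lambda)$. (ii) slot filling: with partial slot allocations $\tau':\Lambda\to S\cup\{\emptyset\}$ ($\tau'(\sigma)\in P^{\kappa(\sigma)}_{\nu(\sigma)}\cup\{\emptyset\}$), $A(\tau')$ the slot allocations extending $\tau'$, and $E(\tau'):=\mathbb E[\sum_kf_\tau(k)w_k\mid\zeta=\lambda,\tau\in A(\tau')]$: start with all slots empty, process slots one at a time, assigning to the current slot $\sigma$ the $i\in P^{\kappa(\sigma)}_{\nu(\sigma)}$ maximizing $E$ of the resulting partial slot allocation; with $\psi$ the final slot allocation, output $X^\psi$. *)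

theory Defs
  imports Complex_Main "HOL-Library.FuncSet"
begin

text \<open>An instance: services S, nodes V, users U (finite sets), sizes s, capacities c,
  required service req k (= i_k), sets T k, rewards w.\<close>

definition beta :: real where "beta = 1/4"
definition gamma :: real where "gamma = 1/2"
definition delta :: real where "delta = 1/4"

definition placement :: "'i set \<Rightarrow> 'j set \<Rightarrow> ('i \<Rightarrow> 'j set) \<Rightarrow> bool" where
  "placement S V X \<longleftrightarrow> (\<forall>i\<in>S. X i \<subseteq> V) \<and> (\<forall>i. i \<notin> S \<longrightarrow> X i = {})"

definition feasible_placement ::
  "'i set \<Rightarrow> 'j set \<Rightarrow> ('i \<Rightarrow> real) \<Rightarrow> ('j \<Rightarrow> real) \<Rightarrow> ('i \<Rightarrow> 'j set) \<Rightarrow> bool" where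
  "feasible_placement S V s c X \<longleftrightarrow> placement S V X \<and>
     (\<forall>j\<in>V. (\<Sum>i\<in>S. s i * (if j \<in> X i then 1 else 0)) \<le> c j)"

definition total_reward ::
  "'k set \<Rightarrow> ('k \<Rightarrow> 'i) \<Rightarrow> ('k \<Rightarrow> 'j set) \<Rightarrow> ('k \<Rightarrow> real) \<Rightarrow> ('i \<Rightarrow> 'j set) \<Rightarrow> real" where
  "total_reward U req T w X = (\<Sum>k\<in>U. w k * (if T k \<inter> X (req k) \<noteq> {} then 1 else 0))"

definition opt_reward ::
  "'i set \<Rightarrow> 'j set \<Rightarrow> 'k set \<Rightarrow> ('i \<Rightarrow> real) \<Rightarrow> ('j \<Rightarrow> real) \<Rightarrow>
   ('k \<Rightarrow> 'i) \<Rightarrow> ('k \<Rightarrow> 'j set) \<Rightarrow> ('k \<Rightarrow> real) \<Rightarrow> real" where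
  "opt_reward S V U s c req T w =
     Max (total_reward U req T w ` {X. feasible_placement S V s c X})"

definition lp_feasible ::
  "'i set \<Rightarrow> 'j set \<Rightarrow> 'k set \<Rightarrow> ('i \<Rightarrow> real) \<Rightarrow> ('j \<Rightarrow> real) \<Rightarrow>
   ('k \<Rightarrow> 'i) \<Rightarrow> ('k \<Rightarrow> 'j set) \<Rightarrow> ('i \<Rightarrow> 'j \<Rightarrow> real) \<Rightarrow> ('k \<Rightarrow> real) \<Rightarrow> bool" where
  "lp_feasible S V U s c req T x y \<longleftrightarrow>
     (\<forall>k\<in>U. 0 \<le> y k \<and> y k \<le> (\<Sum>j\<in>T k. x (req k) j) \<and> y k \<le> 1) \<and>
     (\<forall>j\<in>V. (\<Sum>i\<in>S. x i j * s i) \<le> c j) \<and>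
     (\<forall>i\<in>S. \<forall>j\<in>V. 0 \<le> x i j \<and> x i j \<le> 1 \<and> (s i > c j \<longrightarrow> x i j = 0))"

definition lp_optimal ::
  "'i set \<Rightarrow> 'j set \<Rightarrow> 'k set \<Rightarrow> ('i \<Rightarrow> real) \<Rightarrow> ('j \<Rightarrow> real) \<Rightarrow>
   ('k \<Rightarrow> 'i) \<Rightarrow> ('k \<Rightarrow> 'j set) \<Rightarrow> ('k \<Rightarrow> real) \<Rightarrow> ('i \<Rightarrow> 'j \<Rightarrow> real) \<Rightarrow> ('k \<Rightarrow> real) \<Rightarrow> bool" where
  "lp_optimal S V U s c req T w x y \<longleftrightarrow> lp_feasible S V U s c req T x y \<and>
     (\<forall>x' y'. lp_feasible S V U s c req T x' y' \<longrightarrow>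
        (\<Sum>k\<in>U. y' k * w k) \<le> (\<Sum>k\<in>U. y k * w k))"

text \<open>Size classes: Plus = \<oplus>, Minus = \<ominus>, Lvl q = q \<in> \<nat> (only q \<ge> 1 is used).\<close>

datatype cls = Plus | Minus | Lvl nat

definition Pcls :: "'i set \<Rightarrow> ('i \<Rightarrow> real) \<Rightarrow> ('j \<Rightarrow> real) \<Rightarrow> 'j \<Rightarrow> cls \<Rightarrow> 'i set" where
  "Pcls S s c j q = (case q of
      Plus \<Rightarrow> {i\<in>S. c j / 2 < s i \<and> s i \<le> c j}
    | Minus \<Rightarrow> {i\<in>S. c j / 4 < s i \<and> s i \<le> c j / 2}
    | Lvl n \<Rightarrow> {i\<in>S. gamma ^ n * c j * beta < s i \<and> s i \<le> gamma ^ (n - 1) * c j * beta})"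

definition dcls :: "'i set \<Rightarrow> ('i \<Rightarrow> real) \<Rightarrow> ('j \<Rightarrow> real) \<Rightarrow> ('i \<Rightarrow> 'j \<Rightarrow> real) \<Rightarrow> 'j \<Rightarrow> cls \<Rightarrow> real" where
  "dcls S s c x j q = (\<Sum>i\<in>Pcls S s c j q. x i j)"

definition vnode :: "'i set \<Rightarrow> ('i \<Rightarrow> real) \<Rightarrow> ('j \<Rightarrow> real) \<Rightarrow> ('i \<Rightarrow> 'j \<Rightarrow> real) \<Rightarrow> 'j \<Rightarrow> real" where
  "vnode S s c x j = delta * c j / (\<Sum>i\<in>{i\<in>S. s i \<le> c j * beta}. s i * x i j)"

definition ncnt :: "'i set \<Rightarrow> ('i \<Rightarrow> real) \<Rightarrow> ('j \<Rightarrow> real) \<Rightarrow> ('i \<Rightarrow> 'j \<Rightarrow> real) \<Rightarrow> 'j \<Rightarrow> nat \<Rightarrow> nat" where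
  "ncnt S s c x j q = nat \<lceil>vnode S s c x j * dcls S s c x j (Lvl q)\<rceil>"

definition hnode :: "'i set \<Rightarrow> ('i \<Rightarrow> real) \<Rightarrow> ('j \<Rightarrow> real) \<Rightarrow> ('i \<Rightarrow> 'j \<Rightarrow> real) \<Rightarrow> 'j \<Rightarrow> real" where
  "hnode S s c x j = (if dcls S s c x j Minus < 2 then dcls S s c x j Minus else dcls S s c x j Minus / 2)"

text \<open>Probability that node j gets label a in the random experiment.\<close>

definition plab :: "'i set \<Rightarrow> ('i \<Rightarrow> real) \<Rightarrow> ('j \<Rightarrow> real) \<Rightarrow> ('i \<Rightarrow> 'j \<Rightarrow> real) \<Rightarrow> 'j \<Rightarrow> nat \<Rightarrow> real" where
  "plab S s c x j a =
     (if a = 1 then delta * dcls S s c x j Plus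
      else if a = 2 then delta * hnode S s c x j
      else if a = 3 then 1 - delta * dcls S s c x j Plus - delta * hnode S s c x j
      else 0)"

text \<open>Slots: (node, class, index). A construction map is \<zeta> :: 'j \<Rightarrow> nat with values in {1,2,3}.\<close>

type_synonym 'j slot = "'j \<times> cls \<times> nat"

definition slots :: "'i set \<Rightarrow> 'j set \<Rightarrow> ('i \<Rightarrow> real) \<Rightarrow> ('j \<Rightarrow> real) \<Rightarrow> ('i \<Rightarrow> 'j \<Rightarrow> real) \<Rightarrow>
    ('j \<Rightarrow> nat) \<Rightarrow> 'j slot set" where
  "slots S V s c x \<zeta> =
     {(j, Plus, 0) | j. j \<in> V \<and> \<zeta> j = 1} \<union>
     {(j, Minus, m) | j m. j \<in> V \<and> \<zeta> j = 2 \<and> m < 2} \<union>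
     {(j, Lvl q, m) | j q m. j \<in> V \<and> \<zeta> j = 3 \<and> 1 \<le> q \<and> m < ncnt S s c x j q}"

definition slot_range :: "'i set \<Rightarrow> ('i \<Rightarrow> real) \<Rightarrow> ('j \<Rightarrow> real) \<Rightarrow> 'j slot \<Rightarrow> 'i set" where
  "slot_range S s c \<sigma> = Pcls S s c (fst \<sigma>) (fst (snd \<sigma>))"

definition Xtau :: "'j slot set \<Rightarrow> ('j slot \<Rightarrow> 'i) \<Rightarrow> 'i \<Rightarrow> 'j set" where
  "Xtau L \<tau> i = {j. \<exists>\<sigma>\<in>L. fst \<sigma> = j \<and> \<tau> \<sigma> = i}"

text \<open>E(\<tau>'): expected reward given \<zeta> = lam and \<tau> extending the partial allocation \<tau>'
  (unfilled slots independently drawn with probability x_{i,\<nu>(\<sigma>)} / d^{\<kappa>(\<sigma>)}_{\<nu>(\<sigma>)}).\<close>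

definition Eslot :: "'i set \<Rightarrow> 'j set \<Rightarrow> 'k set \<Rightarrow> ('i \<Rightarrow> real) \<Rightarrow> ('j \<Rightarrow> real) \<Rightarrow>
   ('k \<Rightarrow> 'i) \<Rightarrow> ('k \<Rightarrow> 'j set) \<Rightarrow> ('k \<Rightarrow> real) \<Rightarrow> ('i \<Rightarrow> 'j \<Rightarrow> real) \<Rightarrow>
   ('j \<Rightarrow> nat) \<Rightarrow> ('j slot \<Rightarrow> 'i option) \<Rightarrow> real" where
  "Eslot S V U s c req T w x lam \<tau>' =
    (let L = slots S V s c x lam in
     \<Sum>\<tau>\<in>{\<tau> \<in> PiE L (slot_range S s c). \<forall>\<sigma>\<in>L. \<tau>' \<sigma> \<noteq> None \<longrightarrow> \<tau> \<sigma> = the (\<tau>' \<sigma>)}.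
        (\<Prod>\<sigma>\<in>{\<sigma>\<in>L. \<tau>' \<sigma> = None}. x (\<tau> \<sigma>) (fst \<sigma>) / dcls S s c x (fst \<sigma>) (fst (snd \<sigma>)))
        * total_reward U req T w (Xtau L \<tau>))"

text \<open>E'(\<zeta>'): expected reward given \<zeta> agrees with the partial construction map \<zeta>'
  (None = unlabelled; unlabelled nodes independently drawn with probabilities plab).\<close>

definition Econs :: "'i set \<Rightarrow> 'j set \<Rightarrow> 'k set \<Rightarrow> ('i \<Rightarrow> real) \<Rightarrow> ('j \<Rightarrow> real) \<Rightarrow>
   ('k \<Rightarrow> 'i) \<Rightarrow> ('k \<Rightarrow> 'j set) \<Rightarrow> ('k \<Rightarrow> real) \<Rightarrow> ('i \<Rightarrow> 'j \<Rightarrow> real) \<Rightarrow>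
   ('j \<Rightarrow> nat option) \<Rightarrow> real" where
  "Econs S V U s c req T w x \<zeta>' =
    (\<Sum>\<zeta>\<in>PiE V (\<lambda>j. case \<zeta>' j of None \<Rightarrow> {1, 2, 3} | Some a \<Rightarrow> {a}).
       (\<Prod>j\<in>{j\<in>V. \<zeta>' j = None}. plab S s c x j (\<zeta> j))
       * Eslot S V U s c req T w x \<zeta> (\<lambda>_. None))"

text \<open>A run of SA2: nodes processed in order js, final labels lam; slots processed in
  order sl, final allocation psi; each step takes a maximiser (arbitrary tie-breaking).\<close>

definition sa2_run :: "'i set \<Rightarrow> 'j set \<Rightarrow> 'k set \<Rightarrow> ('i \<Rightarrow> real) \<Rightarrow> ('j \<Rightarrow> real) \<Rightarrow>
   ('k \<Rightarrow> 'i) \<Rightarrow> ('k \<Rightarrow> 'j set) \<Rightarrow> ('k \<Rightarrow> real) \<Rightarrow> ('i \<Rightarrow> 'j \<Rightarrow> real) \<Rightarrow>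
   'j list \<Rightarrow> ('j \<Rightarrow> nat) \<Rightarrow> 'j slot list \<Rightarrow> ('j slot \<Rightarrow> 'i) \<Rightarrow> bool" where
  "sa2_run S V U s c req T w x js lam sl psi \<longleftrightarrow>
    (let lpref = (\<lambda>t j. if j \<in> set (take t js) then Some (lam j) else None);
         L = slots S V s c x lam;
         spref = (\<lambda>t \<sigma>. if \<sigma> \<in> set (take t sl) then Some (psi \<sigma>) else None) in
     distinct js \<and> set js = V \<and> (\<forall>j\<in>V. lam j \<in> {1, 2, 3}) \<and>
     (\<forall>t < length js. \<forall>b \<in> {1, 2, 3}.
        Econs S V U s c req T w x ((lpref t)(js ! t := Some b))
          \<le> Econs S V U s c req T w x (lpref (Suc t))) \<and>
     distinct sl \<and> set sl = L \<and> (\<forall>\<sigma>\<in>L. psi \<sigma> \<in> slot_range S s c \<sigma>) \<and>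
     (\<forall>t < length sl. \<forall>i \<in> slot_range S s c (sl ! t).
        Eslot S V U s c req T w x lam ((spref t)(sl ! t := Some i))
          \<le> Eslot S V U s c req T w x lam (spref (Suc t))))"

definition sa2_output :: "'i set \<Rightarrow> 'j set \<Rightarrow> ('i \<Rightarrow> real) \<Rightarrow> ('j \<Rightarrow> real) \<Rightarrow> ('i \<Rightarrow> 'j \<Rightarrow> real) \<Rightarrow>
   ('j \<Rightarrow> nat) \<Rightarrow> ('j slot \<Rightarrow> 'i) \<Rightarrow> 'i \<Rightarrow> 'j set" where
  "sa2_output S V s c x lam psi = Xtau (slots S V s c x lam) psi"

end

theory Submission
  imports Defs
begin

text \<open>The LP value bounds R from above. In the random experiment, a node j \<in> T k serves user k
  independently of the other nodes, with probability at least (3/16) x_{i_k j}: services of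
  class \<oplus> or \<ominus> are placed with probabilities \<delta> d_j^\<oplus> and \<delta> h, and a small service of
  level q gets \<lceil>v_j d_j^q\<rceil> independent slots, while the capacity constraint makes label 3 likely
  whenever small services carry much load. So user k is missed with probability at most
  exp (-(3/16) y_k), and the expected reward is at least \<Sum>_k w_k y_k / 6 \<ge> (1 - 1/e) LP / 4.
  SA2 derandomizes the experiment by the method of conditional expectations: no greedy
  labelling or slot-filling step decreases the conditional expectation.\<close>

section \<open>Conditional expectations over independent coordinates\<close>

definition prefix_assignment :: "'a list \<Rightarrow> ('a \<Rightarrow> 'b) \<Rightarrow> nat \<Rightarrow> 'a \<Rightarrow> 'b option" where
  "prefix_assignment xs f t a = (if a \<in> set (take t xs) then Some (f a) else None)"

(* Eslot and Econs are both instances of this conditional expectation. *)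
definition expect_given ::
  "'a set \<Rightarrow> ('a \<Rightarrow> 'b set) \<Rightarrow> ('a \<Rightarrow> 'b \<Rightarrow> real) \<Rightarrow> (('a \<Rightarrow> 'b) \<Rightarrow> real) \<Rightarrow>
   ('a \<Rightarrow> 'b option) \<Rightarrow> real" where
  "expect_given L R p F \<tau>' =
     (\<Sum>\<tau>\<in>{\<tau> \<in> PiE L R. \<forall>\<sigma>\<in>L. \<tau>' \<sigma> \<noteq> None \<longrightarrow> \<tau> \<sigma> = the (\<tau>' \<sigma>)}.
        (\<Prod>\<sigma>\<in>{\<sigma>\<in>L. \<tau>' \<sigma> = None}. p \<sigma> (\<tau> \<sigma>)) * F \<tau>)"

lemma expect_given_unconditioned:
  "expect_given L R p F (\<lambda>_. None) = (\<Sum>\<tau>\<in>PiE L R. (\<Prod>\<sigma>\<in>L. p \<sigma> (\<tau> \<sigma>)) * F \<tau>)"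
  unfolding expect_given_def by simp

lemma expect_given_nonneg:
  assumes "\<And>\<sigma> r. \<sigma> \<in> L \<Longrightarrow> r \<in> R \<sigma> \<Longrightarrow> 0 \<le> p \<sigma> r" and "\<And>\<tau>. 0 \<le> F \<tau>"
  shows "0 \<le> expect_given L R p F \<tau>'"
  unfolding expect_given_def
  by (intro sum_nonneg mult_nonneg_nonneg prod_nonneg assms) (auto simp: PiE_iff)

lemma expect_given_all_fixed:
  assumes "\<And>\<sigma>. \<sigma> \<in> L \<Longrightarrow> f \<sigma> \<in> R \<sigma>" and "\<And>\<sigma>. \<sigma> \<in> L \<Longrightarrow> \<tau>' \<sigma> = Some (f \<sigma>)"
  shows "expect_given L R p F \<tau>' = F (restrict f L)"
proof -
  have "{\<tau> \<in> PiE L R. \<forall>\<sigma>\<in>L. \<tau>' \<sigma> \<noteq> None \<longrightarrow> \<tau> \<sigma> = the (\<tau>' \<sigma>)} = {restrict f L}"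
    and "{\<sigma>\<in>L. \<tau>' \<sigma> = None} = {}"
    using assms by (auto simp: PiE_iff extensional_def)
  then show ?thesis unfolding expect_given_def by (simp only:) simp
qed

lemma expect_given_fix_one:
  assumes L: "finite L" "\<And>\<sigma>. \<sigma> \<in> L \<Longrightarrow> finite (R \<sigma>)"
    and \<sigma>0: "\<sigma>0 \<in> L" "\<tau>' \<sigma>0 = None"
  shows "expect_given L R p F \<tau>' = (\<Sum>r\<in>R \<sigma>0. p \<sigma>0 r * expect_given L R p F (\<tau>'(\<sigma>0 := Some r)))"
proof -
  define A where "A = {\<tau> \<in> PiE L R. \<forall>\<sigma>\<in>L. \<tau>' \<sigma> \<noteq> None \<longrightarrow> \<tau> \<sigma> = the (\<tau>' \<sigma>)}"
  define N where "N = {\<sigma>\<in>L. \<tau>' \<sigma> = None}"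
  define g where "g = (\<lambda>\<tau>. (\<Prod>\<sigma>\<in>N. p \<sigma> (\<tau> \<sigma>)) * F \<tau>)"
  have "finite A"
    by (rule finite_subset[of A "PiE L R"]) (auto simp: A_def intro: finite_PiE L)
  moreover have "(\<lambda>\<tau>. \<tau> \<sigma>0) ` A \<subseteq> R \<sigma>0"
    using \<sigma>0 unfolding A_def by (auto simp: PiE_iff)
  ultimately have "expect_given L R p F \<tau>' = (\<Sum>r\<in>R \<sigma>0. sum g {\<tau> \<in> A. \<tau> \<sigma>0 = r})"
    using sum.group[of A "R \<sigma>0" "\<lambda>\<tau>. \<tau> \<sigma>0" g] L \<sigma>0
    unfolding expect_given_def A_def N_def g_def by simp
  also have "\<dots> = (\<Sum>r\<in>R \<sigma>0. p \<sigma>0 r * expect_given L R p F (\<tau>'(\<sigma>0 := Some r)))"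
  proof (rule sum.cong[OF refl])
    fix r
    have set_eq: "{\<tau> \<in> PiE L R. \<forall>\<sigma>\<in>L. (\<tau>'(\<sigma>0 := Some r)) \<sigma> \<noteq> None \<longrightarrow>
                                       \<tau> \<sigma> = the ((\<tau>'(\<sigma>0 := Some r)) \<sigma>)} = {\<tau> \<in> A. \<tau> \<sigma>0 = r}"
      unfolding A_def using \<sigma>0 by auto
    have free_eq: "{\<sigma>\<in>L. (\<tau>'(\<sigma>0 := Some r)) \<sigma> = None} = N - {\<sigma>0}"
      unfolding N_def by auto
    have "finite N" "\<sigma>0 \<in> N" using L \<sigma>0 unfolding N_def by auto
    then have "g \<tau> = p \<sigma>0 r * ((\<Prod>\<sigma>\<in>N - {\<sigma>0}. p \<sigma> (\<tau> \<sigma>)) * F \<tau>)" if "\<tau> \<sigma>0 = r" for \<tau>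
      using prod.remove[of N \<sigma>0 "\<lambda>\<sigma>. p \<sigma> (\<tau> \<sigma>)"] that unfolding g_def by simp
    then show "sum g {\<tau> \<in> A. \<tau> \<sigma>0 = r} = p \<sigma>0 r * expect_given L R p F (\<tau>'(\<sigma>0 := Some r))"
      unfolding expect_given_def set_eq free_eq sum_distrib_left by (intro sum.cong) auto
  qed
  finally show ?thesis .
qed

lemma expect_given_greedy:
  assumes L: "finite L" "\<And>\<sigma>. \<sigma> \<in> L \<Longrightarrow> finite (R \<sigma>)"
    and p: "\<And>\<sigma> r. \<sigma> \<in> L \<Longrightarrow> r \<in> R \<sigma> \<Longrightarrow> 0 \<le> p \<sigma> r" "\<And>\<sigma>. \<sigma> \<in> L \<Longrightarrow> (\<Sum>r\<in>R \<sigma>. p \<sigma> r) \<le> 1"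
    and F: "\<And>\<tau>. 0 \<le> F \<tau>"
    and sl: "distinct sl" "set sl = L" and f: "\<And>\<sigma>. \<sigma> \<in> L \<Longrightarrow> f \<sigma> \<in> R \<sigma>"
    and greedy: "\<forall>t < length sl. \<forall>r \<in> R (sl ! t).
       expect_given L R p F ((prefix_assignment sl f t)(sl ! t := Some r))
         \<le> expect_given L R p F (prefix_assignment sl f (Suc t))"
  shows "expect_given L R p F (\<lambda>_. None) \<le> F (restrict f L)"
proof -
  let ?E = "\<lambda>t. expect_given L R p F (prefix_assignment sl f t)"
  have "?E 0 \<le> ?E t" if "t \<le> length sl" for t
    using that
  proof (induction t)
    case (Suc t)
    then have t: "t < length sl" by simp
    define \<sigma>0 where "\<sigma>0 = sl ! t"
    have \<sigma>0L: "\<sigma>0 \<in> L" using t sl unfolding \<sigma>0_def by auto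
    have "\<sigma>0 \<notin> set (take t sl)"
      using sl(1) t unfolding \<sigma>0_def by (auto simp: in_set_conv_nth nth_eq_iff_index_eq)
    then have "prefix_assignment sl f t \<sigma>0 = None"
      unfolding prefix_assignment_def by simp
    then have "?E t = (\<Sum>r\<in>R \<sigma>0. p \<sigma>0 r *
                 expect_given L R p F ((prefix_assignment sl f t)(\<sigma>0 := Some r)))"
      using L \<sigma>0L by (intro expect_given_fix_one) auto
    also have "\<dots> \<le> (\<Sum>r\<in>R \<sigma>0. p \<sigma>0 r * ?E (Suc t))"
      using greedy t p(1)[OF \<sigma>0L] unfolding \<sigma>0_def by (intro sum_mono mult_left_mono) auto
    also have "\<dots> = (\<Sum>r\<in>R \<sigma>0. p \<sigma>0 r) * ?E (Suc t)"
      by (simp add: sum_distrib_right)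
    also have "\<dots> \<le> ?E (Suc t)"
    proof -
      have "0 \<le> ?E (Suc t)" by (rule expect_given_nonneg) (use p(1) F in auto)
      moreover have "0 \<le> (\<Sum>r\<in>R \<sigma>0. p \<sigma>0 r)" using p(1)[OF \<sigma>0L] by (simp add: sum_nonneg)
      ultimately show ?thesis using p(2)[OF \<sigma>0L] by (simp add: mult_left_le_one_le)
    qed
    finally show ?case using Suc by simp
  qed simp
  moreover have "prefix_assignment sl f 0 = (\<lambda>_. None)"
    unfolding prefix_assignment_def by (simp add: fun_eq_iff)
  moreover have "?E (length sl) = F (restrict f L)"
    using sl f by (intro expect_given_all_fixed) (auto simp: prefix_assignment_def)
  ultimately show ?thesis by (metis order_refl)
qed

lemma expect_given_sum:
  "expect_given L R p (\<lambda>\<tau>. \<Sum>k\<in>U. w k * F k \<tau>) \<tau>' = (\<Sum>k\<in>U. w k * expect_given L R p (F k) \<tau>')"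
  unfolding expect_given_def sum_distrib_left
  by (subst sum.swap) (simp add: algebra_simps)

lemma expect_given_cong_support:
  assumes "finite L"
    and "\<And>\<tau>. \<tau> \<in> PiE L R \<Longrightarrow> (\<And>\<sigma>. \<sigma> \<in> L \<Longrightarrow> p \<sigma> (\<tau> \<sigma>) \<noteq> 0) \<Longrightarrow> F \<tau> = G \<tau>"
  shows "expect_given L R p F (\<lambda>_. None) = expect_given L R p G (\<lambda>_. None)"
  unfolding expect_given_unconditioned
proof (rule sum.cong[OF refl])
  fix \<tau> assume "\<tau> \<in> PiE L R"
  then show "(\<Prod>\<sigma>\<in>L. p \<sigma> (\<tau> \<sigma>)) * F \<tau> = (\<Prod>\<sigma>\<in>L. p \<sigma> (\<tau> \<sigma>)) * G \<tau>"
    using assms by (cases "\<exists>\<sigma>\<in>L. p \<sigma> (\<tau> \<sigma>) = 0") auto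
qed

lemma expect_given_one_minus_prod:
  assumes L: "finite L" "\<And>\<sigma>. \<sigma> \<in> L \<Longrightarrow> finite (R \<sigma>)"
    and p: "\<And>\<sigma>. \<sigma> \<in> L \<Longrightarrow> (\<Sum>r\<in>R \<sigma>. p \<sigma> r) = 1"
  shows "expect_given L R p (\<lambda>\<tau>. 1 - (\<Prod>\<sigma>\<in>L. g \<sigma> (\<tau> \<sigma>))) (\<lambda>_. None)
           = 1 - (\<Prod>\<sigma>\<in>L. \<Sum>r\<in>R \<sigma>. p \<sigma> r * g \<sigma> r)"
proof -
  have "expect_given L R p (\<lambda>\<tau>. 1 - (\<Prod>\<sigma>\<in>L. g \<sigma> (\<tau> \<sigma>))) (\<lambda>_. None)
      = (\<Sum>\<tau>\<in>PiE L R. \<Prod>\<sigma>\<in>L. p \<sigma> (\<tau> \<sigma>)) - (\<Sum>\<tau>\<in>PiE L R. \<Prod>\<sigma>\<in>L. p \<sigma> (\<tau> \<sigma>) * g \<sigma> (\<tau> \<sigma>))"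
    unfolding expect_given_unconditioned prod.distrib sum_subtractf[symmetric]
    by (simp add: algebra_simps)
  also have "\<dots> = (\<Prod>\<sigma>\<in>L. \<Sum>r\<in>R \<sigma>. p \<sigma> r) - (\<Prod>\<sigma>\<in>L. \<Sum>r\<in>R \<sigma>. p \<sigma> r * g \<sigma> r)"
    using L by (simp add: prod_sum_PiE)
  finally show ?thesis using p by simp
qed

section \<open>Elementary inequalities\<close>

lemma exp_neg_le_inverse_Taylor:
  fixes z :: real assumes "0 \<le> z"
  shows "exp (- z) \<le> 1 / (1 + z + z\<^sup>2 / 2)"
proof -
  have "0 < 1 + z + z\<^sup>2 / 2" using assms by (simp add: add_pos_nonneg)
  then show ?thesis
    using exp_lower_Taylor_quadratic[OF assms] by (simp add: exp_minus inverse_eq_divide divide_left_mono)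
qed

lemma exp_neg_le_Taylor:
  fixes z :: real assumes "0 \<le> z"
  shows "exp (- z) \<le> 1 - z + z\<^sup>2 / 2"
proof -
  have pos: "0 < 1 + z + z\<^sup>2 / 2" using assms by (simp add: add_pos_nonneg)
  have "(1 - z + z\<^sup>2 / 2) * (1 + z + z\<^sup>2 / 2) = 1 + z ^ 4 / 4"
    by (simp add: field_simps power2_eq_square power4_eq_xxxx)
  then have "1 \<le> (1 - z + z\<^sup>2 / 2) * (1 + z + z\<^sup>2 / 2)"
    by simp
  then have "1 / (1 + z + z\<^sup>2 / 2) \<le> 1 - z + z\<^sup>2 / 2"
    using pos by (simp add: divide_le_eq)
  then show ?thesis using exp_neg_le_inverse_Taylor[OF assms] by linarith
qed

lemma one_minus_pow_le_exp:
  fixes t :: real assumes "t \<le> 1"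
  shows "(1 - t) ^ n \<le> exp (- (real n * t))"
proof -
  have "(1 - t) ^ n \<le> exp (- t) ^ n"
    using assms exp_ge_add_one_self[of "- t"] by (intro power_mono) auto
  then show ?thesis by (simp add: exp_of_nat_mult[symmetric])
qed

lemma level_gain_bound_few_slots:
  fixes x u a z :: real
  assumes x: "0 < x" "x \<le> 1" and z: "0 < z" "z \<le> 1" "u * z = x / 4"
    and a: "1/4 + u/2 \<le> a" "u \<le> a"
  shows "3/16 * x \<le> a * (1 - exp (- z))"
proof -
  have u: "0 < u" using x z by (auto simp: zero_less_mult_iff)
  have g: "z * (1 - z/2) \<le> 1 - exp (- z)"
    using exp_neg_le_Taylor[of z] z by (simp add: algebra_simps power2_eq_square)
  have g0: "0 \<le> z * (1 - z/2)" using z by simp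
  show ?thesis
  proof (cases "1/2 \<le> u")
    case True
    have "1/2 * z \<le> u * z" using True z(1) by (intro mult_right_mono) auto
    then have "z \<le> 1/2" using z(3) x by linarith
    then have "x/4 * (3/4) \<le> x/4 * (1 - z/2)"
      using x by (intro mult_left_mono) auto
    also have "\<dots> = u * (z * (1 - z/2))"
      using z(3) by (simp add: mult.assoc[symmetric])
    also have "\<dots> \<le> a * (1 - exp (- z))"
      using a(2) g g0 u by (intro mult_mono) auto
    finally show ?thesis by simp
  next
    case False
    have "u * z \<le> 1/2 * z" using False z(1) by (intro mult_right_mono) auto
    then have zx: "x / 2 \<le> z" using z(3) by linarith
    have "u = x / (4 * z)" using z by (simp add: field_simps)
    then have a': "1/4 + x / (8 * z) \<le> a" using a(1) by simp
    have "(1/4 + x / (8 * z)) * (z * (1 - z/2)) - 3/16 * x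
            = (z - x/2) * (1 - z) / 8 + z * (1 - x) / 8"
      using z by (simp add: field_simps)
    also have "\<dots> \<ge> 0" using zx z x by (simp add: mult_nonneg_nonneg)
    finally have "3/16 * x \<le> (1/4 + x / (8 * z)) * (z * (1 - z/2))" by simp
    also have "\<dots> \<le> a * (1 - exp (- z))"
      using a' g g0 u a by (intro mult_mono) auto
    finally show ?thesis .
  qed
qed

lemma level_gain_bound_many_slots:
  fixes x u a z :: real
  assumes x: "0 < x" "x \<le> 1" and z: "1 < z" "u * z = x / 4"
    and a: "1/4 + u/2 \<le> a" and u: "0 < u"
  shows "3/16 * x \<le> a * (1 - exp (- z))"
proof -
  have "exp (- z) \<le> exp (- 1)" using z by simp
  also have "\<dots> \<le> 2/5" using exp_neg_le_inverse_Taylor[of 1] by simp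
  finally have g1: "3/5 \<le> 1 - exp (- z)" by simp
  show ?thesis
  proof (cases "z \<le> 2")
    case True
    have "u * z \<le> u * 2" using True u by (intro mult_left_mono) auto
    then have "x / 8 \<le> u" using z by simp
    then have "(1/4 + x/16) * (3/5) \<le> a * (1 - exp (- z))"
      using a g1 u by (intro mult_mono) auto
    then show ?thesis using x by simp
  next
    case False
    have "exp (- z) \<le> exp (- 2)" using False by simp
    also have "\<dots> \<le> 1/5" using exp_neg_le_inverse_Taylor[of 2] by simp
    finally have "1/4 * (4/5) \<le> a * (1 - exp (- z))"
      using a u by (intro mult_mono) auto
    then show ?thesis using x by simp
  qed
qed

(* u is the share of the capacity used by small services, a the probability of label 3, and
   x / (4 u) = v x a lower bound on the expected number of slots holding the service. *)
lemma level_gain_bound: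
  fixes x u a :: real
  assumes x: "0 < x" "x \<le> 1" and u: "0 < u" and a: "1/4 + u/2 \<le> a" "u \<le> a"
  shows "3/16 * x \<le> a * (1 - exp (- (x / (4 * u))))"
proof -
  define z where "z = x / (4 * u)"
  have z: "0 < z" "u * z = x / 4" unfolding z_def using x u by auto
  have "3/16 * x \<le> a * (1 - exp (- z))"
  proof (cases "z \<le> 1")
    case True
    show ?thesis using level_gain_bound_few_slots[OF x z(1) True z(2) a] .
  next
    case False
    then show ?thesis using level_gain_bound_many_slots[OF x _ z(2) a(1) u] by simp
  qed
  then show ?thesis by (simp add: z_def)
qed

lemma minus_gain_bound:
  fixes d x :: real assumes x: "0 < x" "x \<le> d" "x \<le> 1"
  shows "3/16 * x \<le> 1/4 * (if d < 2 then d else d/2) * (1 - (1 - x/d)\<^sup>2)"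
proof -
  define t where "t = x / d"
  have d: "0 < d" using x by simp
  have t: "0 \<le> t" "t \<le> 1" "d * t = x" unfolding t_def using x d by auto
  define g where "g = 1 - (1 - t)\<^sup>2"
  have "g * d = (d * t) * (2 - t)" unfolding g_def by (simp add: power2_eq_square algebra_simps)
  then have gain: "d * g = x * (2 - t)" using t(3) by (simp add: mult.commute)
  have "3/16 * x \<le> 1/4 * (if d < 2 then d else d/2) * g"
  proof (cases "d < 2")
    case True
    have "x * 1 \<le> x * (2 - t)" using t x by (intro mult_left_mono) auto
    then show ?thesis using True gain x by simp
  next
    case False
    have "t \<le> 1/2" unfolding t_def using False x d by (simp add: field_simps)
    then have "x * (3/2) \<le> x * (2 - t)" using x by (intro mult_left_mono) auto
    then show ?thesis using False gain by simp
  qed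
  then show ?thesis unfolding g_def t_def .
qed

lemma user_gain_bound:
  fixes y :: real assumes "0 \<le> y" "y \<le> 1"
  shows "y / 6 \<le> 1 - exp (- (3/16 * y))"
proof -
  have "y * y \<le> y * 1" using assms by (intro mult_left_mono) auto
  then have "y / 6 \<le> 3/16 * y - (3/16 * y)\<^sup>2 / 2"
    using assms by (simp add: power2_eq_square)
  also have "\<dots> \<le> 1 - exp (- (3/16 * y))"
    using exp_neg_le_Taylor[of "3/16 * y"] assms by simp
  finally show ?thesis .
qed

lemma approx_ratio_le_one_sixth: "(1 - exp (- 1)) / 4 \<le> (1/6 :: real)"
proof -
  have "1/3 \<le> exp (- 1 :: real)"
    using exp_le by (simp add: exp_minus inverse_eq_divide field_simps)
  then show ?thesis by simp
qed

section \<open>SPSC instances with a feasible LP solution\<close>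

lemma Pcls_subset: "Pcls S s c j q \<subseteq> S"
  unfolding Pcls_def by (cases q) auto

lemma total_reward_Xtau:
  assumes "finite L"
  shows "total_reward U req T w (Xtau L \<tau>) =
     (\<Sum>k\<in>U. w k * (1 - (\<Prod>\<sigma>\<in>L. if fst \<sigma> \<in> T k \<and> \<tau> \<sigma> = req k then 0 else 1)))"
  unfolding total_reward_def
proof (intro sum.cong refl arg_cong2[where f = "(*)"])
  fix k
  show "(if T k \<inter> Xtau L \<tau> (req k) \<noteq> {} then 1 else 0) =
        1 - (\<Prod>\<sigma>\<in>L. if fst \<sigma> \<in> T k \<and> \<tau> \<sigma> = req k then 0 else 1 :: real)"
  proof (cases "\<exists>\<sigma>\<in>L. fst \<sigma> \<in> T k \<and> \<tau> \<sigma> = req k")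
    case True
    then show ?thesis using assms by (auto simp: Xtau_def prod_zero_iff)
  next
    case False
    then show ?thesis by (auto simp: Xtau_def intro!: prod.neutral)
  qed
qed

locale spsc_lp =
  fixes S :: "'i set" and V :: "'j set" and U :: "'k set"
    and s :: "'i \<Rightarrow> real" and c :: "'j \<Rightarrow> real"
    and req :: "'k \<Rightarrow> 'i" and T :: "'k \<Rightarrow> 'j set" and w :: "'k \<Rightarrow> real"
    and x :: "'i \<Rightarrow> 'j \<Rightarrow> real" and y :: "'k \<Rightarrow> real"
  assumes finite_S: "finite S" and finite_V: "finite V" and finite_U: "finite U"
    and size_pos: "\<And>i. i \<in> S \<Longrightarrow> 0 < s i" and capacity_pos: "\<And>j. j \<in> V \<Longrightarrow> 0 < c j"
    and users: "\<And>k. k \<in> U \<Longrightarrow> req k \<in> S \<and> T k \<subseteq> V \<and> 0 < w k"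
    and feasible: "lp_feasible S V U s c req T x y"
begin

lemma x_nonneg: "i \<in> S \<Longrightarrow> j \<in> V \<Longrightarrow> 0 \<le> x i j"
  and x_le_one: "i \<in> S \<Longrightarrow> j \<in> V \<Longrightarrow> x i j \<le> 1"
  and x_eq_0_if_too_large: "i \<in> S \<Longrightarrow> j \<in> V \<Longrightarrow> c j < s i \<Longrightarrow> x i j = 0"
  and capacity: "j \<in> V \<Longrightarrow> (\<Sum>i\<in>S. x i j * s i) \<le> c j"
  and y_bounds: "k \<in> U \<Longrightarrow> 0 \<le> y k \<and> y k \<le> 1 \<and> y k \<le> (\<Sum>j\<in>T k. x (req k) j)"
  using feasible unfolding lp_feasible_def by auto

lemma total_reward_nonneg: "0 \<le> total_reward U req T w X"
  unfolding total_reward_def using users by (intro sum_nonneg) (auto simp: less_imp_le)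

lemma finite_Pcls: "finite (Pcls S s c j q)"
  using finite_subset[OF Pcls_subset finite_S] .

lemma dcls_nonneg: "j \<in> V \<Longrightarrow> 0 \<le> dcls S s c x j q"
  unfolding dcls_def using Pcls_subset[of S s c j q] by (intro sum_nonneg x_nonneg) auto

lemma x_le_dcls: "j \<in> V \<Longrightarrow> i \<in> Pcls S s c j q \<Longrightarrow> x i j \<le> dcls S s c x j q"
  unfolding dcls_def using Pcls_subset[of S s c j q]
  by (intro member_le_sum finite_Pcls) (auto intro: x_nonneg)

definition node_slots :: "'j \<Rightarrow> nat \<Rightarrow> (cls \<times> nat) set" where
  "node_slots j a =
     (if a = 1 then {(Plus, 0)} else if a = 2 then {(Minus, 0), (Minus, 1)}
      else if a = 3 then {(Lvl q, m) | q m. 1 \<le> q \<and> m < ncnt S s c x j q} else {})"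

lemma slots_eq_Sigma: "slots S V s c x \<zeta> = Sigma V (\<lambda>j. node_slots j (\<zeta> j))"
  unfolding slots_def node_slots_def by (auto simp: less_2_cases_iff split: if_splits)

lemma slots_restrict: "slots S V s c x (restrict \<zeta> V) = slots S V s c x \<zeta>"
  unfolding slots_def by auto

lemma Lvl_class_unique:
  assumes j: "j \<in> V" and "i \<in> Pcls S s c j (Lvl q)" "i \<in> Pcls S s c j (Lvl q')"
  shows "q = q'"
proof -
  have separated: "\<not> (i \<in> Pcls S s c j (Lvl a) \<and> i \<in> Pcls S s c j (Lvl b))" if "a < b" for a b
  proof -
    have "gamma ^ (b - 1) \<le> gamma ^ a" using that by (intro power_decreasing) (auto simp: gamma_def)
    then have "gamma ^ (b - 1) * c j * beta \<le> gamma ^ a * c j * beta"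
      using capacity_pos[OF j] by (intro mult_right_mono) (auto simp: beta_def)
    then show ?thesis unfolding Pcls_def by auto
  qed
  show ?thesis
  proof (cases q q' rule: linorder_cases)
    case less
    then show ?thesis using assms separated[of q q'] by blast
  next
    case greater
    then show ?thesis using assms separated[of q' q] by blast
  qed
qed

lemma finite_node_slots:
  assumes j: "j \<in> V" shows "finite (node_slots j a)"
proof -
  define Q where "Q = {q. ncnt S s c x j q \<noteq> 0}"
  have fin_levels: "finite {q. i \<in> Pcls S s c j (Lvl q)}" for i
  proof (cases "\<exists>q. i \<in> Pcls S s c j (Lvl q)")
    case True
    then obtain q0 where "i \<in> Pcls S s c j (Lvl q0)" by blast
    then have "{q. i \<in> Pcls S s c j (Lvl q)} \<subseteq> {q0}" using Lvl_class_unique[OF j] by blast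
    then show ?thesis by (rule finite_subset) simp
  qed simp
  have "Q \<subseteq> (\<Union>i\<in>S. {q. i \<in> Pcls S s c j (Lvl q)})"
  proof
    fix q assume "q \<in> Q"
    then have "Pcls S s c j (Lvl q) \<noteq> {}" unfolding Q_def ncnt_def dcls_def by auto
    then show "q \<in> (\<Union>i\<in>S. {q. i \<in> Pcls S s c j (Lvl q)})" using Pcls_subset[of S s c j "Lvl q"] by blast
  qed
  moreover have "finite (\<Union>i\<in>S. {q. i \<in> Pcls S s c j (Lvl q)})"
    using finite_S fin_levels by simp
  ultimately have fin_Q: "finite Q" by (rule finite_subset)
  have "{(Lvl q, m) | q m. 1 \<le> q \<and> m < ncnt S s c x j q}
          \<subseteq> Lvl ` Q \<times> {..<Max (ncnt S s c x j ` Q)}"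
  proof
    fix z assume "z \<in> {(Lvl q, m) | q m. 1 \<le> q \<and> m < ncnt S s c x j q}"
    then obtain q m where z: "z = (Lvl q, m)" and m: "m < ncnt S s c x j q" by blast
    then have q: "q \<in> Q" unfolding Q_def by auto
    then have "ncnt S s c x j q \<le> Max (ncnt S s c x j ` Q)" using fin_Q by simp
    then show "z \<in> Lvl ` Q \<times> {..<Max (ncnt S s c x j ` Q)}" using z m q by auto
  qed
  then have "finite {(Lvl q, m) | q m. 1 \<le> q \<and> m < ncnt S s c x j q}"
    using fin_Q by (meson finite_SigmaI finite_imageI finite_lessThan finite_subset)
  then show ?thesis unfolding node_slots_def by simp
qed

lemma finite_slots: "finite (slots S V s c x \<zeta>)"
  unfolding slots_eq_Sigma using finite_V finite_node_slots by (intro finite_SigmaI) auto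

lemma slot_node: "\<sigma> \<in> slots S V s c x \<zeta> \<Longrightarrow> fst \<sigma> \<in> V"
  unfolding slots_eq_Sigma by auto

definition small_load :: "'j \<Rightarrow> real" where
  "small_load j = (\<Sum>i\<in>{i\<in>S. s i \<le> c j * beta}. s i * x i j)"

lemma class_loads_le_capacity:
  assumes j: "j \<in> V"
  shows "dcls S s c x j Plus * (c j / 2) + dcls S s c x j Minus * (c j / 4)
           + small_load j \<le> c j"
proof -
  define A where "A = Pcls S s c j Plus"
  define B where "B = Pcls S s c j Minus"
  define C where "C = {i\<in>S. s i \<le> c j * beta}"
  have cj: "0 < c j" using capacity_pos[OF j] .
  have A: "A = {i\<in>S. c j / 2 < s i \<and> s i \<le> c j}" and B: "B = {i\<in>S. c j / 4 < s i \<and> s i \<le> c j / 2}"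
    unfolding A_def B_def Pcls_def by simp_all
  have fin: "finite A" "finite B" "finite C" unfolding A B C_def using finite_S by auto
  have "(\<Sum>i\<in>A. x i j * s i) + (\<Sum>i\<in>B. x i j * s i) + (\<Sum>i\<in>C. x i j * s i)
          = (\<Sum>i\<in>A \<union> B \<union> C. x i j * s i)"
  proof -
    have "A \<inter> B = {}" "(A \<union> B) \<inter> C = {}" unfolding A B C_def beta_def using cj by auto
    then show ?thesis using fin by (simp add: sum.union_disjoint)
  qed
  also have "\<dots> \<le> (\<Sum>i\<in>S. x i j * s i)"
    using finite_S x_nonneg[OF _ j] size_pos
    by (intro sum_mono2) (auto simp: A B C_def less_imp_le)
  also have "\<dots> \<le> c j" using capacity[OF j] .
  finally have total: "(\<Sum>i\<in>A. x i j * s i) + (\<Sum>i\<in>B. x i j * s i) + (\<Sum>i\<in>C. x i j * s i) \<le> c j" .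
  have "dcls S s c x j Plus * (c j / 2) \<le> (\<Sum>i\<in>A. x i j * s i)"
    unfolding dcls_def A_def[symmetric] sum_distrib_right
    using x_nonneg[OF _ j] by (intro sum_mono mult_left_mono) (auto simp: A)
  moreover have "dcls S s c x j Minus * (c j / 4) \<le> (\<Sum>i\<in>B. x i j * s i)"
    unfolding dcls_def B_def[symmetric] sum_distrib_right
    using x_nonneg[OF _ j] by (intro sum_mono mult_left_mono) (auto simp: B)
  moreover have "(\<Sum>i\<in>C. s i * x i j) = (\<Sum>i\<in>C. x i j * s i)"
    by (simp add: mult.commute)
  ultimately show ?thesis using total unfolding small_load_def C_def by linarith
qed

lemma small_load_nonneg: "j \<in> V \<Longrightarrow> 0 \<le> small_load j"
  unfolding small_load_def using size_pos x_nonneg by (intro sum_nonneg mult_nonneg_nonneg) (auto simp: less_imp_le)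

lemma dcls_Plus_le: "j \<in> V \<Longrightarrow> dcls S s c x j Plus \<le> 2"
  and dcls_Minus_le: "j \<in> V \<Longrightarrow> dcls S s c x j Minus \<le> 4"
proof -
  assume j: "j \<in> V"
  have "0 \<le> dcls S s c x j Minus * (c j / 4)" "0 \<le> dcls S s c x j Plus * (c j / 2)"
    using dcls_nonneg[OF j] capacity_pos[OF j] by simp_all
  then have "dcls S s c x j Plus * (c j / 2) \<le> c j" "dcls S s c x j Minus * (c j / 4) \<le> c j"
    using class_loads_le_capacity[OF j] small_load_nonneg[OF j] by linarith+
  then show "dcls S s c x j Plus \<le> 2" "dcls S s c x j Minus \<le> 4"
    using capacity_pos[OF j] by (simp_all add: field_simps)
qed

lemma plab_nonneg: "j \<in> V \<Longrightarrow> a \<in> {1, 2, 3} \<Longrightarrow> 0 \<le> plab S s c x j a"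
  using dcls_Plus_le[of j] dcls_Minus_le[of j] dcls_nonneg[of j Plus] dcls_nonneg[of j Minus]
  unfolding plab_def hnode_def delta_def by auto

lemma sum_plab: "(\<Sum>a\<in>{1, 2, 3}. plab S s c x j a) = 1"
  unfolding plab_def by simp

lemma dcls_nonzero_if_plab_nonzero:
  assumes \<sigma>: "\<sigma> \<in> slots S V s c x \<zeta>" and \<zeta>: "plab S s c x (fst \<sigma>) (\<zeta> (fst \<sigma>)) \<noteq> 0"
  shows "dcls S s c x (fst \<sigma>) (fst (snd \<sigma>)) \<noteq> 0"
proof -
  obtain j r where \<sigma>_eq: "\<sigma> = (j, r)" and r: "r \<in> node_slots j (\<zeta> j)"
    using \<sigma> unfolding slots_eq_Sigma by auto
  consider "\<zeta> j = 1" "r = (Plus, 0)" | m where "\<zeta> j = 2" "r = (Minus, m)"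
    | q m where "\<zeta> j = 3" "r = (Lvl q, m)" "m < ncnt S s c x j q"
    using r unfolding node_slots_def by (auto split: if_splits)
  then show ?thesis
    using \<zeta> unfolding \<sigma>_eq plab_def hnode_def ncnt_def by cases auto
qed

definition slot_prob :: "'j slot \<Rightarrow> 'i \<Rightarrow> real" where
  "slot_prob \<sigma> i = x i (fst \<sigma>) / dcls S s c x (fst \<sigma>) (fst (snd \<sigma>))"

definition hit_prob :: "'k \<Rightarrow> 'j slot \<Rightarrow> real" where
  "hit_prob k \<sigma> = (if fst \<sigma> \<in> T k \<and> req k \<in> slot_range S s c \<sigma> then slot_prob \<sigma> (req k) else 0)"

definition miss_prob :: "'k \<Rightarrow> 'j \<Rightarrow> nat \<Rightarrow> real" where
  "miss_prob k j a = (\<Prod>r\<in>node_slots j a. 1 - hit_prob k (j, r))"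

lemma finite_slot_range: "finite (slot_range S s c \<sigma>)"
  unfolding slot_range_def by (rule finite_Pcls)

lemma slot_prob_nonneg: "\<sigma> \<in> slots S V s c x \<zeta> \<Longrightarrow> i \<in> slot_range S s c \<sigma> \<Longrightarrow> 0 \<le> slot_prob \<sigma> i"
  unfolding slot_prob_def slot_range_def
  using slot_node[of \<sigma> \<zeta>] Pcls_subset[of S s c "fst \<sigma>" "fst (snd \<sigma>)"]
  by (intro divide_nonneg_nonneg x_nonneg dcls_nonneg) auto

lemma sum_slot_prob:
  "(\<Sum>i\<in>slot_range S s c \<sigma>. slot_prob \<sigma> i) =
     (if dcls S s c x (fst \<sigma>) (fst (snd \<sigma>)) = 0 then 0 else 1)"
  unfolding slot_prob_def slot_range_def sum_divide_distrib[symmetric] dcls_def[symmetric] by simp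

lemma hit_prob_bounds:
  assumes j: "j \<in> V" shows "0 \<le> hit_prob k (j, r) \<and> hit_prob k (j, r) \<le> 1"
proof (cases "j \<in> T k \<and> req k \<in> Pcls S s c j (fst r)")
  case True
  then have "0 \<le> x (req k) j" "x (req k) j \<le> dcls S s c x j (fst r)"
    using Pcls_subset[of S s c j "fst r"] x_nonneg[OF _ j] x_le_dcls[OF j] by blast+
  then show ?thesis
    using True unfolding hit_prob_def slot_prob_def slot_range_def by (auto simp: divide_le_eq_1)
next
  case False
  then show ?thesis unfolding hit_prob_def slot_range_def by auto
qed

lemma sum_slot_prob_miss:
  assumes "(\<Sum>i\<in>slot_range S s c \<sigma>. slot_prob \<sigma> i) = 1"
  shows "(\<Sum>i\<in>slot_range S s c \<sigma>. slot_prob \<sigma> i * (if fst \<sigma> \<in> T k \<and> i = req k then 0 else 1))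
           = 1 - hit_prob k \<sigma>"
proof -
  have "(\<Sum>i\<in>slot_range S s c \<sigma>. slot_prob \<sigma> i * (if fst \<sigma> \<in> T k \<and> i = req k then 0 else 1))
          = (\<Sum>i\<in>slot_range S s c \<sigma>. slot_prob \<sigma> i)
            - (\<Sum>i\<in>slot_range S s c \<sigma>. if fst \<sigma> \<in> T k \<and> i = req k then slot_prob \<sigma> i else 0)"
    unfolding sum_subtractf[symmetric] by (intro sum.cong) auto
  then show ?thesis
    using assms finite_slot_range unfolding hit_prob_def
    by (cases "fst \<sigma> \<in> T k") (simp_all add: sum.delta)
qed

lemma miss_prob_bounds: "j \<in> V \<Longrightarrow> 0 \<le> miss_prob k j a \<and> miss_prob k j a \<le> 1"
  unfolding miss_prob_def using hit_prob_bounds by (auto intro!: prod_nonneg prod_le_1)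

section \<open>The expected reward of the random experiment\<close>

lemma Eslot_eq_expect_given:
  "Eslot S V U s c req T w x \<zeta> \<tau>' =
     expect_given (slots S V s c x \<zeta>) (slot_range S s c) slot_prob
       (\<lambda>\<tau>. total_reward U req T w (Xtau (slots S V s c x \<zeta>) \<tau>)) \<tau>'"
  unfolding Eslot_def expect_given_def Let_def slot_prob_def by simp

lemma Econs_eq_expect_given:
  assumes "\<And>j a. j \<in> V \<Longrightarrow> \<zeta>' j = Some a \<Longrightarrow> a \<in> {1, 2, 3}"
  shows "Econs S V U s c req T w x \<zeta>' =
           expect_given V (\<lambda>_. {1, 2, 3}) (plab S s c x)
             (\<lambda>\<zeta>. Eslot S V U s c req T w x \<zeta> (\<lambda>_. None)) \<zeta>'"
proof -
  have member_iff: "\<zeta> j \<in> (case \<zeta>' j of None \<Rightarrow> {1, 2, 3} | Some a \<Rightarrow> {a}) \<longleftrightarrow>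
          \<zeta> j \<in> {1, 2, 3} \<and> (\<zeta>' j \<noteq> None \<longrightarrow> \<zeta> j = the (\<zeta>' j))"
    if "j \<in> V" for \<zeta> :: "'j \<Rightarrow> nat" and j
    using assms that by (cases "\<zeta>' j") auto
  have "PiE V (\<lambda>j. case \<zeta>' j of None \<Rightarrow> {1, 2, 3} | Some a \<Rightarrow> {a}) =
               {\<zeta> \<in> PiE V (\<lambda>_. {1, 2, 3}). \<forall>j\<in>V. \<zeta>' j \<noteq> None \<longrightarrow> \<zeta> j = the (\<zeta>' j)}"
    by (rule set_eqI) (auto simp: PiE_iff member_iff)
  then show ?thesis unfolding Econs_def expect_given_def by simp
qed

lemma prod_slots:
  "(\<Prod>\<sigma>\<in>slots S V s c x \<zeta>. f \<sigma>) = (\<Prod>j\<in>V. \<Prod>r\<in>node_slots j (\<zeta> j). f (j, r))"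
  unfolding slots_eq_Sigma using finite_V finite_node_slots
  by (subst prod.Sigma) (auto simp: case_prod_beta')

(* A slot of a class with d = 0 has all weights x / 0 = 0 and would annihilate the expectation;
   labels of positive probability create no such slots. *)
lemma Eslot_unconditioned:
  assumes "\<And>j. j \<in> V \<Longrightarrow> plab S s c x j (\<zeta> j) \<noteq> 0"
  shows "Eslot S V U s c req T w x \<zeta> (\<lambda>_. None) =
           (\<Sum>k\<in>U. w k * (1 - (\<Prod>j\<in>V. miss_prob k j (\<zeta> j))))"
proof -
  let ?L = "slots S V s c x \<zeta>" and ?R = "slot_range S s c"
  define g where "g k (\<sigma> :: 'j slot) i = (if fst \<sigma> \<in> T k \<and> i = req k then 0 else 1 :: real)" for k \<sigma> i
  have one: "(\<Sum>i\<in>?R \<sigma>. slot_prob \<sigma> i) = 1" if "\<sigma> \<in> ?L" for \<sigma>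
    using sum_slot_prob[of \<sigma>] dcls_nonzero_if_plab_nonzero[OF that] assms slot_node[OF that] by auto
  have "(\<Sum>i\<in>?R \<sigma>. slot_prob \<sigma> i * g k \<sigma> i) = 1 - hit_prob k \<sigma>" if "\<sigma> \<in> ?L" for k \<sigma>
    unfolding g_def using sum_slot_prob_miss one[OF that] by simp
  then have "(\<Prod>\<sigma>\<in>?L. \<Sum>i\<in>?R \<sigma>. slot_prob \<sigma> i * g k \<sigma> i) = (\<Prod>\<sigma>\<in>?L. 1 - hit_prob k \<sigma>)" for k
    by (intro prod.cong) auto
  then have "(\<Prod>\<sigma>\<in>?L. \<Sum>i\<in>?R \<sigma>. slot_prob \<sigma> i * g k \<sigma> i) = (\<Prod>j\<in>V. miss_prob k j (\<zeta> j))" for k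
    unfolding miss_prob_def by (simp add: prod_slots)
  moreover have "Eslot S V U s c req T w x \<zeta> (\<lambda>_. None) =
      (\<Sum>k\<in>U. w k * expect_given ?L ?R slot_prob (\<lambda>\<tau>. 1 - (\<Prod>\<sigma>\<in>?L. g k \<sigma> (\<tau> \<sigma>))) (\<lambda>_. None))"
    unfolding Eslot_eq_expect_given total_reward_Xtau[OF finite_slots] g_def expect_given_sum ..
  ultimately show ?thesis
    using one finite_slots finite_slot_range by (simp add: expect_given_one_minus_prod)
qed

lemma Econs_unconditioned:
  "Econs S V U s c req T w x (\<lambda>_. None) =
     (\<Sum>k\<in>U. w k * (1 - (\<Prod>j\<in>V. \<Sum>a\<in>{1, 2, 3}. plab S s c x j a * miss_prob k j a)))"
proof -
  let ?E = "expect_given V (\<lambda>_. {1, 2, 3}) (plab S s c x)"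
  have "Econs S V U s c req T w x (\<lambda>_. None) = ?E (\<lambda>\<zeta>. Eslot S V U s c req T w x \<zeta> (\<lambda>_. None)) (\<lambda>_. None)"
    by (rule Econs_eq_expect_given) simp
  also have "\<dots> = ?E (\<lambda>\<zeta>. \<Sum>k\<in>U. w k * (1 - (\<Prod>j\<in>V. miss_prob k j (\<zeta> j)))) (\<lambda>_. None)"
    using finite_V by (intro expect_given_cong_support Eslot_unconditioned)
  also have "\<dots> = (\<Sum>k\<in>U. w k * ?E (\<lambda>\<zeta>. 1 - (\<Prod>j\<in>V. miss_prob k j (\<zeta> j))) (\<lambda>_. None))"
    by (rule expect_given_sum)
  finally show ?thesis
    using finite_V sum_plab by (simp add: expect_given_one_minus_prod)
qed

lemma sum_plab_miss_le:
  assumes j: "j \<in> V" and a0: "a0 \<in> {1, 2, 3}"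
  shows "(\<Sum>a\<in>{1, 2, 3}. plab S s c x j a * miss_prob k j a)
           \<le> 1 - plab S s c x j a0 * (1 - miss_prob k j a0)"
proof -
  have "(\<Sum>a\<in>{1, 2, 3}. plab S s c x j a * miss_prob k j a)
          = 1 - (\<Sum>a\<in>{1, 2, 3}. plab S s c x j a * (1 - miss_prob k j a))"
    using sum_plab[of j] by (simp add: algebra_simps sum_subtractf)
  moreover have "plab S s c x j a0 * (1 - miss_prob k j a0)
                   \<le> (\<Sum>a\<in>{1, 2, 3}. plab S s c x j a * (1 - miss_prob k j a))"
    using a0 plab_nonneg[OF j] miss_prob_bounds[OF j]
    by (intro member_le_sum mult_nonneg_nonneg) auto
  ultimately show ?thesis by linarith
qed

lemma sum_plab_miss_le_one:
  assumes j: "j \<in> V" shows "(\<Sum>a\<in>{1, 2, 3}. plab S s c x j a * miss_prob k j a) \<le> 1"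
proof -
  have "(\<Sum>a\<in>{1, 2, 3}. plab S s c x j a * miss_prob k j a) \<le> (\<Sum>a\<in>{1, 2, 3}. plab S s c x j a)"
    using plab_nonneg[OF j] miss_prob_bounds[OF j] by (intro sum_mono mult_left_le) auto
  then show ?thesis using sum_plab[of j] by simp
qed

lemma exists_level_class:
  assumes j: "j \<in> V" and i: "i \<in> S" and small: "s i \<le> c j / 4"
  obtains q where "1 \<le> q" "i \<in> Pcls S s c j (Lvl q)"
proof -
  define above where "above q \<longleftrightarrow> gamma ^ q * c j * beta < s i" for q
  obtain n where "(1/2 :: real) ^ n < s i / (c j * beta)"
    using real_arch_pow_inv[of "s i / (c j * beta)" "1/2"] size_pos[OF i] capacity_pos[OF j]
    by (auto simp: beta_def)
  then have "above n"
    unfolding above_def gamma_def using capacity_pos[OF j] by (simp add: beta_def field_simps)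
  define q where "q = (LEAST q. above q)"
  have "above q" unfolding q_def by (rule LeastI[of above n]) fact
  moreover have "q \<noteq> 0"
  proof
    assume "q = 0"
    then show False using \<open>above q\<close> small unfolding above_def beta_def by simp
  qed
  moreover have "\<not> above (q - 1)"
    using \<open>q \<noteq> 0\<close> not_less_Least[of "q - 1" above] unfolding q_def by auto
  ultimately have "1 \<le> q" "i \<in> Pcls S s c j (Lvl q)"
    using i unfolding above_def Pcls_def by auto
  then show ?thesis by (rule that)
qed

lemma plus_gain:
  assumes j: "j \<in> V" "j \<in> T k" and i: "req k \<in> Pcls S s c j Plus"
  shows "3/16 * x (req k) j \<le> plab S s c x j 1 * (1 - miss_prob k j 1)"
proof -
  define d where "d = dcls S s c x j Plus"
  have x: "0 \<le> x (req k) j" "x (req k) j \<le> d"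
    using x_nonneg[OF _ j(1)] Pcls_subset[of S s c j Plus] i x_le_dcls[OF j(1) i]
    unfolding d_def by auto
  have "miss_prob k j 1 = 1 - x (req k) j / d"
    unfolding miss_prob_def node_slots_def hit_prob_def slot_prob_def slot_range_def
    using j i by (simp add: d_def)
  then have "plab S s c x j 1 * (1 - miss_prob k j 1) = x (req k) j / 4"
    using x unfolding plab_def delta_def d_def[symmetric] by auto
  then show ?thesis using x by simp
qed

lemma minus_gain:
  assumes j: "j \<in> V" "j \<in> T k" and i: "req k \<in> Pcls S s c j Minus"
    and pos: "0 < x (req k) j"
  shows "3/16 * x (req k) j \<le> plab S s c x j 2 * (1 - miss_prob k j 2)"
proof -
  define d where "d = dcls S s c x j Minus"
  have "miss_prob k j 2 = (1 - x (req k) j / d)\<^sup>2"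
    unfolding miss_prob_def node_slots_def hit_prob_def slot_prob_def slot_range_def
    using j i by (simp add: d_def power2_eq_square)
  moreover have "x (req k) j \<le> d" "x (req k) j \<le> 1"
    using x_le_dcls[OF j(1) i] x_le_one[OF _ j(1)] Pcls_subset[of S s c j Minus] i
    unfolding d_def by auto
  ultimately show ?thesis
    using minus_gain_bound[OF pos] unfolding plab_def delta_def hnode_def d_def by simp
qed

lemma miss_prob_level_le:
  assumes j: "j \<in> V" "j \<in> T k" and i: "req k \<in> Pcls S s c j (Lvl q)" and q: "1 \<le> q"
  shows "miss_prob k j 3 \<le> (1 - x (req k) j / dcls S s c x j (Lvl q)) ^ ncnt S s c x j q"
proof -
  define B where "B = (\<lambda>m. (Lvl q, m)) ` {..<ncnt S s c x j q}"
  have B: "B \<subseteq> node_slots j 3" unfolding B_def node_slots_def using q by auto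
  have factor: "0 \<le> 1 - hit_prob k (j, r) \<and> 1 - hit_prob k (j, r) \<le> 1" for r
    using hit_prob_bounds[OF j(1)] by auto
  have "miss_prob k j 3 = (\<Prod>r\<in>node_slots j 3 - B. 1 - hit_prob k (j, r)) * (\<Prod>r\<in>B. 1 - hit_prob k (j, r))"
    unfolding miss_prob_def using B finite_node_slots[OF j(1)] by (rule prod.subset_diff)
  also have "\<dots> \<le> (\<Prod>r\<in>B. 1 - hit_prob k (j, r))"
    using factor by (intro mult_left_le_one_le prod_nonneg prod_le_1) auto
  also have "\<dots> = (1 - x (req k) j / dcls S s c x j (Lvl q)) ^ ncnt S s c x j q"
    unfolding B_def using j i
    by (subst prod.reindex) (auto simp: inj_on_def hit_prob_def slot_prob_def slot_range_def)
  finally show ?thesis .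
qed

lemma plab_level_ge:
  assumes j: "j \<in> V"
  shows "1/4 + small_load j / c j / 2 \<le> plab S s c x j 3" and "small_load j / c j \<le> plab S s c x j 3"
proof -
  have "dcls S s c x j Plus / 2 + dcls S s c x j Minus / 4 + small_load j / c j \<le> 1"
    using class_loads_le_capacity[OF j] capacity_pos[OF j] by (simp add: field_simps)
  moreover have "hnode S s c x j \<le> 1 + dcls S s c x j Minus / 2" "hnode S s c x j \<le> dcls S s c x j Minus"
    using dcls_nonneg[OF j, of Minus] unfolding hnode_def by auto
  ultimately show "1/4 + small_load j / c j / 2 \<le> plab S s c x j 3" "small_load j / c j \<le> plab S s c x j 3"
    using dcls_nonneg[OF j, of Plus] unfolding plab_def delta_def by simp_all
qed

lemma miss_prob_level_le_exp:
  assumes j: "j \<in> V" "j \<in> T k" and i: "req k \<in> Pcls S s c j (Lvl q)" and q: "1 \<le> q"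
  shows "miss_prob k j 3 \<le> exp (- (vnode S s c x j * x (req k) j))"
proof -
  define X d n where "X = x (req k) j" and "d = dcls S s c x j (Lvl q)" and "n = ncnt S s c x j q"
  have X: "0 \<le> X" "X \<le> d"
    using x_nonneg[OF _ j(1)] Pcls_subset[of S s c j "Lvl q"] i x_le_dcls[OF j(1) i]
    unfolding X_def d_def by auto
  have "vnode S s c x j * X \<le> real n * (X / d)"
  proof (cases "d = 0")
    case False
    have "vnode S s c x j * d \<le> real n" unfolding n_def ncnt_def d_def by linarith
    then have "vnode S s c x j * d * (X / d) \<le> real n * (X / d)"
      using X by (intro mult_right_mono) auto
    then show ?thesis using False by simp
  qed (use X in simp)
  then have "exp (- (real n * (X / d))) \<le> exp (- (vnode S s c x j * X))" by simp
  moreover have "(1 - X / d) ^ n \<le> exp (- (real n * (X / d)))"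
    using X by (intro one_minus_pow_le_exp) (auto simp: divide_le_eq_1)
  ultimately show ?thesis
    using miss_prob_level_le[OF j i q] unfolding X_def d_def n_def by linarith
qed

lemma small_load_pos:
  assumes j: "j \<in> V" and i: "i \<in> Pcls S s c j (Lvl q)" and pos: "0 < x i j"
  shows "0 < small_load j"
proof -
  have iS: "i \<in> S" using i Pcls_subset[of S s c j "Lvl q"] by blast
  have "gamma ^ (q - 1) * (c j * beta) \<le> 1 * (c j * beta)"
    using capacity_pos[OF j] by (intro mult_right_mono power_le_one) (auto simp: gamma_def beta_def)
  then have "s i \<le> c j * beta"
    using i unfolding Pcls_def by (simp add: mult.assoc)
  then have "s i * x i j \<le> small_load j"
    unfolding small_load_def using iS finite_S size_pos x_nonneg[OF _ j]
    by (intro member_le_sum) (auto intro: mult_nonneg_nonneg less_imp_le)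
  moreover have "0 < s i * x i j" using pos size_pos[OF iS] by simp
  ultimately show ?thesis by linarith
qed

lemma level_gain:
  assumes j: "j \<in> V" "j \<in> T k" and i: "req k \<in> Pcls S s c j (Lvl q)" and q: "1 \<le> q"
    and pos: "0 < x (req k) j"
  shows "3/16 * x (req k) j \<le> plab S s c x j 3 * (1 - miss_prob k j 3)"
proof -
  define X u where "X = x (req k) j" and "u = small_load j / c j"
  have X: "0 < X" "X \<le> 1"
    using pos x_le_one[OF _ j(1)] Pcls_subset[of S s c j "Lvl q"] i unfolding X_def by auto
  have u: "0 < u"
    unfolding u_def using small_load_pos[OF j(1) i pos] capacity_pos[OF j(1)] by simp
  have "vnode S s c x j * X = X / (4 * u)"
    unfolding vnode_def small_load_def[symmetric] u_def delta_def using capacity_pos[OF j(1)] u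
    by (simp add: field_simps)
  then have miss: "miss_prob k j 3 \<le> exp (- (X / (4 * u)))"
    using miss_prob_level_le_exp[OF j i q] unfolding X_def by simp
  have "3/16 * X \<le> plab S s c x j 3 * (1 - exp (- (X / (4 * u))))"
    by (rule level_gain_bound[OF X u]) (use plab_level_ge[OF j(1)] in \<open>simp_all add: u_def\<close>)
  also have "\<dots> \<le> plab S s c x j 3 * (1 - miss_prob k j 3)"
    using miss plab_nonneg[OF j(1), of 3] by (intro mult_left_mono) auto
  finally show ?thesis unfolding X_def .
qed

lemma node_miss_bound:
  assumes k: "k \<in> U" and j: "j \<in> V" "j \<in> T k"
  shows "(\<Sum>a\<in>{1, 2, 3}. plab S s c x j a * miss_prob k j a) \<le> 1 - 3/16 * x (req k) j"
proof -
  let ?i = "req k"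
  have i: "?i \<in> S" using users[OF k] by simp
  show ?thesis
  proof (cases "x ?i j = 0")
    case True
    then show ?thesis using sum_plab_miss_le_one[OF j(1)] by simp
  next
    case False
    then have pos: "0 < x ?i j" using x_nonneg[OF i j(1)] by simp
    have fits: "s ?i \<le> c j" using x_eq_0_if_too_large[OF i j(1)] False by force
    consider "c j / 2 < s ?i" | "c j / 4 < s ?i" "s ?i \<le> c j / 2" | "s ?i \<le> c j / 4" by linarith
    then show ?thesis
    proof cases
      case 1
      then have "?i \<in> Pcls S s c j Plus" using fits i unfolding Pcls_def by simp
      then show ?thesis using plus_gain[OF j] sum_plab_miss_le[OF j(1), of 1 k] by fastforce
    next
      case 2
      then have "?i \<in> Pcls S s c j Minus" using i unfolding Pcls_def by simp
      then show ?thesis using minus_gain[OF j _ pos] sum_plab_miss_le[OF j(1), of 2 k] by fastforce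
    next
      case 3
      then obtain q where "1 \<le> q" "?i \<in> Pcls S s c j (Lvl q)"
        using exists_level_class[OF j(1) i] by blast
      then show ?thesis using level_gain[OF j _ _ pos] sum_plab_miss_le[OF j(1), of 3 k] by fastforce
    qed
  qed
qed

lemma user_miss_bound:
  assumes k: "k \<in> U"
  shows "(\<Prod>j\<in>V. \<Sum>a\<in>{1, 2, 3}. plab S s c x j a * miss_prob k j a) \<le> exp (- (3/16 * y k))"
proof -
  define f where "f j = (if j \<in> T k then 3/16 * x (req k) j else 0)" for j
  have T: "T k \<subseteq> V" and i: "req k \<in> S" using users[OF k] by auto
  have "(\<Prod>j\<in>V. \<Sum>a\<in>{1, 2, 3}. plab S s c x j a * miss_prob k j a) \<le> (\<Prod>j\<in>V. 1 - f j)"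
  proof (rule prod_mono)
    fix j assume j: "j \<in> V"
    show "0 \<le> (\<Sum>a\<in>{1, 2, 3}. plab S s c x j a * miss_prob k j a) \<and>
               (\<Sum>a\<in>{1, 2, 3}. plab S s c x j a * miss_prob k j a) \<le> 1 - f j"
      using node_miss_bound[OF k j] sum_plab_miss_le_one[OF j] plab_nonneg[OF j] miss_prob_bounds[OF j]
      unfolding f_def by (auto intro!: sum_nonneg)
  qed
  also have "\<dots> \<le> (\<Prod>j\<in>V. exp (- f j))"
  proof (rule prod_mono)
    fix j assume j: "j \<in> V"
    have "f j \<le> 1" using x_le_one[OF i j] unfolding f_def by simp
    then show "0 \<le> 1 - f j \<and> 1 - f j \<le> exp (- f j)"
      using exp_ge_add_one_self[of "- f j"] by simp
  qed
  also have "\<dots> = exp (- (3/16 * (\<Sum>j\<in>T k. x (req k) j)))"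
    using finite_V T
    by (simp add: exp_sum[symmetric] sum_negf f_def sum.If_cases Int_absorb1 sum_distrib_left)
  also have "\<dots> \<le> exp (- (3/16 * y k))"
    using y_bounds[OF k] by simp
  finally show ?thesis .
qed

lemma expected_reward_lower_bound:
  "(1 - exp (- 1)) / 4 * (\<Sum>k\<in>U. y k * w k) \<le> Econs S V U s c req T w x (\<lambda>_. None)"
proof -
  have "(1 - exp (- 1)) / 4 * (y k * w k)
          \<le> w k * (1 - (\<Prod>j\<in>V. \<Sum>a\<in>{1, 2, 3}. plab S s c x j a * miss_prob k j a))"
    if k: "k \<in> U" for k
  proof -
    have y: "0 \<le> y k" "y k \<le> 1" and w: "0 < w k" using y_bounds[OF k] users[OF k] by auto
    have "(1 - exp (- 1)) / 4 * y k \<le> y k / 6"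
      using mult_right_mono[OF approx_ratio_le_one_sixth y(1)] by simp
    also have "\<dots> \<le> 1 - exp (- (3/16 * y k))" by (rule user_gain_bound[OF y])
    also have "\<dots> \<le> 1 - (\<Prod>j\<in>V. \<Sum>a\<in>{1, 2, 3}. plab S s c x j a * miss_prob k j a)"
      using user_miss_bound[OF k] by simp
    finally show ?thesis using w by (simp add: mult_right_mono mult.commute mult.left_commute)
  qed
  then show ?thesis
    unfolding Econs_unconditioned sum_distrib_left by (rule sum_mono)
qed

section \<open>Derandomization\<close>

lemma sa2_labelling_improves:
  assumes "sa2_run S V U s c req T w x js lam sl psi"
  shows "Econs S V U s c req T w x (\<lambda>_. None) \<le> Eslot S V U s c req T w x lam (\<lambda>_. None)"
proof -
  let ?E = "expect_given V (\<lambda>_. {1, 2, 3}) (plab S s c x) (\<lambda>\<zeta>. Eslot S V U s c req T w x \<zeta> (\<lambda>_. None))"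
  have run: "distinct js" "set js = V" "\<And>j. j \<in> V \<Longrightarrow> lam j \<in> {1, 2, 3}"
    "\<forall>t < length js. \<forall>b \<in> {1, 2, 3}.
       Econs S V U s c req T w x ((prefix_assignment js lam t)(js ! t := Some b))
         \<le> Econs S V U s c req T w x (prefix_assignment js lam (Suc t))"
    using assms unfolding sa2_run_def Let_def prefix_assignment_def[abs_def] by auto
  have labels: "a \<in> {1, 2, 3}" if "prefix_assignment js lam t j = Some a" "j \<in> V" for t j a
    using that run(3) unfolding prefix_assignment_def by (auto split: if_splits)
  have "Econs S V U s c req T w x (\<lambda>_. None) = ?E (\<lambda>_. None)"
    by (rule Econs_eq_expect_given) simp
  also have "\<dots> \<le> Eslot S V U s c req T w x (restrict lam V) (\<lambda>_. None)"
  proof (rule expect_given_greedy[OF finite_V _ _ _ _ run(1,2)])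
    show "\<forall>t < length js. \<forall>b \<in> {1, 2, 3}.
            ?E ((prefix_assignment js lam t)(js ! t := Some b)) \<le> ?E (prefix_assignment js lam (Suc t))"
    proof (intro allI impI ballI)
      fix t and b :: nat assume t: "t < length js" and b: "b \<in> {1, 2, 3}"
      have "?E ((prefix_assignment js lam t)(js ! t := Some b))
              = Econs S V U s c req T w x ((prefix_assignment js lam t)(js ! t := Some b))"
        by (rule Econs_eq_expect_given[symmetric]) (use labels b in \<open>auto split: if_splits\<close>)
      also have "\<dots> \<le> Econs S V U s c req T w x (prefix_assignment js lam (Suc t))"
        using run(4) t b by blast
      also have "\<dots> = ?E (prefix_assignment js lam (Suc t))"
        by (rule Econs_eq_expect_given) (use labels in auto)
      finally show "?E ((prefix_assignment js lam t)(js ! t := Some b)) \<le> ?E (prefix_assignment js lam (Suc t))" .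
    qed
  qed (use run(3) sum_plab[simplified] in
         \<open>auto simp: plab_nonneg Eslot_eq_expect_given
            intro!: expect_given_nonneg slot_prob_nonneg total_reward_nonneg\<close>)
  also have "\<dots> = Eslot S V U s c req T w x lam (\<lambda>_. None)"
    unfolding Eslot_def slots_restrict ..
  finally show ?thesis .
qed

lemma sa2_filling_improves:
  assumes "sa2_run S V U s c req T w x js lam sl psi"
  shows "Eslot S V U s c req T w x lam (\<lambda>_. None) \<le> total_reward U req T w (sa2_output S V s c x lam psi)"
proof -
  let ?L = "slots S V s c x lam"
  let ?G = "\<lambda>\<tau>. total_reward U req T w (Xtau ?L \<tau>)"
  have run: "distinct sl" "set sl = ?L" "\<And>\<sigma>. \<sigma> \<in> ?L \<Longrightarrow> psi \<sigma> \<in> slot_range S s c \<sigma>"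
    "\<forall>t < length sl. \<forall>i \<in> slot_range S s c (sl ! t).
       Eslot S V U s c req T w x lam ((prefix_assignment sl psi t)(sl ! t := Some i))
         \<le> Eslot S V U s c req T w x lam (prefix_assignment sl psi (Suc t))"
    using assms unfolding sa2_run_def Let_def prefix_assignment_def[abs_def] by auto
  have "Eslot S V U s c req T w x lam (\<lambda>_. None) \<le> ?G (restrict psi ?L)"
    unfolding Eslot_eq_expect_given
    by (rule expect_given_greedy[OF finite_slots _ _ _ _ run(1,2)])
       (use run(3,4) in \<open>auto simp: Eslot_eq_expect_given sum_slot_prob finite_slot_range
          intro: slot_prob_nonneg total_reward_nonneg\<close>)
  also have "Xtau ?L (restrict psi ?L) = Xtau ?L psi" unfolding Xtau_def by auto
  finally show ?thesis unfolding sa2_output_def .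
qed

end

section \<open>The LP relaxation\<close>

lemma lp_feasible_placement:
  assumes "feasible_placement S V s c X" and "finite S" and "\<forall>i\<in>S. s i > 0"
    and "\<And>k. k \<in> U \<Longrightarrow> finite (T k)"
  shows "lp_feasible S V U s c req T (\<lambda>i j. if j \<in> X i then 1 else 0)
           (\<lambda>k. if T k \<inter> X (req k) \<noteq> {} then 1 else 0)"
  unfolding lp_feasible_def
proof (intro conjI ballI)
  fix k assume k: "k \<in> U"
  show "0 \<le> (if T k \<inter> X (req k) \<noteq> {} then 1 else 0 :: real)"
    and "(if T k \<inter> X (req k) \<noteq> {} then 1 else 0 :: real) \<le> 1" by auto
  show "(if T k \<inter> X (req k) \<noteq> {} then 1 else 0) \<le> (\<Sum>j\<in>T k. if j \<in> X (req k) then 1 else 0 :: real)"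
  proof (cases "T k \<inter> X (req k) = {}")
    case False
    then obtain j where "j \<in> T k" "j \<in> X (req k)" by blast
    then have "1 \<le> (\<Sum>j\<in>T k. if j \<in> X (req k) then 1 else 0 :: real)"
      using assms(4)[OF k] member_le_sum[of j "T k" "\<lambda>j. if j \<in> X (req k) then 1 else 0 :: real"]
      by simp
    then show ?thesis using False by simp
  qed (simp add: sum_nonneg)
next
  fix j assume j: "j \<in> V"
  show "(\<Sum>i\<in>S. (if j \<in> X i then 1 else 0) * s i) \<le> c j"
    using assms(1) j unfolding feasible_placement_def by (simp add: mult.commute)
next
  fix i j assume i: "i \<in> S" and j: "j \<in> V"
  have "s i * (if j \<in> X i then 1 else 0) \<le> (\<Sum>i\<in>S. s i * (if j \<in> X i then 1 else 0))"
    using assms(2,3) i by (intro member_le_sum) (auto simp: less_imp_le)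
  also have "\<dots> \<le> c j" using assms(1) j unfolding feasible_placement_def by simp
  finally show "0 \<le> (if j \<in> X i then 1 else 0 :: real)" "(if j \<in> X i then 1 else 0 :: real) \<le> 1"
    "c j < s i \<longrightarrow> (if j \<in> X i then 1 else 0 :: real) = 0" by auto
qed

lemma opt_reward_le_lp_value:
  assumes "finite S" "finite V" "finite U" "\<forall>i\<in>S. s i > 0" "\<forall>j\<in>V. c j > 0"
    and "\<forall>k\<in>U. req k \<in> S \<and> T k \<subseteq> V \<and> w k > 0"
    and opt: "lp_optimal S V U s c req T w x y"
  shows "opt_reward S V U s c req T w \<le> (\<Sum>k\<in>U. y k * w k)"
proof -
  have "total_reward U req T w ` {X. feasible_placement S V s c X} \<subseteq> (\<lambda>K. \<Sum>k\<in>K. w k) ` Pow U"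
  proof
    fix r assume "r \<in> total_reward U req T w ` {X. feasible_placement S V s c X}"
    then obtain X where "r = total_reward U req T w X" by blast
    also have "\<dots> = (\<Sum>k\<in>{k\<in>U. T k \<inter> X (req k) \<noteq> {}}. w k)"
      unfolding total_reward_def sum.inter_filter[OF assms(3)] by (rule sum.cong) auto
    finally show "r \<in> (\<lambda>K. \<Sum>k\<in>K. w k) ` Pow U" by blast
  qed
  then have "finite (total_reward U req T w ` {X. feasible_placement S V s c X})"
    by (rule finite_subset) (simp add: assms(3))
  moreover have "feasible_placement S V s c (\<lambda>_. {})"
    using assms(5) unfolding feasible_placement_def placement_def by (auto simp: less_imp_le)
  moreover have "total_reward U req T w X \<le> (\<Sum>k\<in>U. y k * w k)" if "feasible_placement S V s c X" for X
  proof -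
    have "\<And>k. k \<in> U \<Longrightarrow> finite (T k)" using assms(2,6) finite_subset by blast
    then have "(\<Sum>k\<in>U. (if T k \<inter> X (req k) \<noteq> {} then 1 else 0) * w k) \<le> (\<Sum>k\<in>U. y k * w k)"
      using opt lp_feasible_placement[OF that assms(1,4)] unfolding lp_optimal_def by blast
    then show ?thesis unfolding total_reward_def by (simp add: mult.commute)
  qed
  ultimately show ?thesis unfolding opt_reward_def by (intro Max.boundedI) auto
qed

theorem theorem13:
  fixes S :: "'i set" and V :: "'j set" and U :: "'k set"
    and s :: "'i \<Rightarrow> real" and c :: "'j \<Rightarrow> real"
    and req :: "'k \<Rightarrow> 'i" and T :: "'k \<Rightarrow> 'j set" and w :: "'k \<Rightarrow> real"
    and x :: "'i \<Rightarrow> 'j \<Rightarrow> real" and y :: "'k \<Rightarrow> real"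
    and js :: "'j list" and lam :: "'j \<Rightarrow> nat" and sl :: "'j slot list" and psi :: "'j slot \<Rightarrow> 'i"
  assumes "finite S" and "finite V" and "finite U"
    and "\<forall>i\<in>S. s i > 0" and "\<forall>j\<in>V. c j > 0"
    and "\<forall>k\<in>U. req k \<in> S \<and> T k \<subseteq> V \<and> w k > 0"
    and "lp_optimal S V U s c req T w x y"
    and "sa2_run S V U s c req T w x js lam sl psi"
  shows "total_reward U req T w (sa2_output S V s c x lam psi)
           \<ge> (1 - exp (-1)) * opt_reward S V U s c req T w / 4"
proof -
  interpret spsc_lp S V U s c req T w x y
    using assms unfolding lp_optimal_def by unfold_locales auto
  have "(1 - exp (-1)) * opt_reward S V U s c req T w / 4 \<le> (1 - exp (-1)) / 4 * (\<Sum>k\<in>U. y k * w k)"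
    using opt_reward_le_lp_value[OF assms(1-7)] by simp
  also have "\<dots> \<le> Econs S V U s c req T w x (\<lambda>_. None)"
    by (rule expected_reward_lower_bound)
  also have "\<dots> \<le> Eslot S V U s c req T w x lam (\<lambda>_. None)"
    by (rule sa2_labelling_improves[OF assms(8)])
  also have "\<dots> \<le> total_reward U req T w (sa2_output S V s c x lam psi)"
    by (rule sa2_filling_improves[OF assms(8)])
  finally show ?thesis .
qed

end
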